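(* Let $P$ be a closed process of the Value-Passing Quality Calculus in which variables and names are bound exactly once and all quality guards are $\forall$ or $\exists$. For all labels $l$ occurring in $P$, the formula $[\![l]\!]$ contains no literal $\bar{x}$ of an input variable; in particular, $[\![l]\!]$ only contains literals $\bar{c}$ related to channels $c$.
   Context: Syntax: $P ::= \mathsf{0} \mid (\nu c)P \mid P_1 \mid P_2 \mid {^l}b.P \mid {^l}\bar{c}\langle t\rangle.P \mid\ !P \mid {^l}\mathsf{case}\ x\ \mathsf{of}\ \mathsf{some}(y): P_1\ \mathsf{else}\ P_2$; binders $b ::= c?x \mid \&_q(b_1,\dots,b_n)$, with $[\![\forall]\!]$ = conjunction and $[\![\exists]\!]$ = disjunction; terms $t::=c\mid y$; labels are unique. Translation: $T(\mathsf{0},\varphi)=\emptyset$; $T(!P,\varphi)=T(P,\varphi)$; $T(P_1\mid P_2,\varphi)=T(P_1,\varphi)\cup T(P_2,\varphi)$; $T((\nu c)P,\varphi)=T(P,\varphi)$; $T({^l}b.P,\varphi)=T(P,\varphi\wedge \mathsf{hp}(b))\cup\mathsf{th}(\varphi,b)\cup\{\varphi\leadsto\bar{l}\}$; $T({^l}\bar{c}\langle t\rangle.P,\varphi)=T(P,\varphi)\cup\{\varphi\leadsto\bar{c}\}\cup\{\varphi\leadsto\bar{l}\}$; $T({^l}\mathsf{case}\ x\ \mathsf{of}\ \mathsf{some}(y):P_1\ \mathsf{else}\ P_2,\varphi)=T(P_1,\varphi\wedge\bar{x})\cup T(P_2,\varphi\wedge\neg\bar{x})\cup\{\varphi\leadsto\bar{l}\}$;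 with $\mathsf{hp}(c?x)=\bar{c}$, $\mathsf{th}(\varphi,c?x)=\{(\varphi\wedge\bar{c})\leadsto\bar{x}\}$, $\mathsf{hp}(\&_q(b_1,\dots,b_n))=[\![q]\!](\mathsf{hp}(b_1),\dots,\mathsf{hp}(b_n))$, $\mathsf{th}(\varphi,\&_q(b_1,\dots,b_n))=\bigcup_i\mathsf{th}(\varphi,b_i)$. Normalise $T(P,\mathsf{tt})$ by merging constraints with the same consequent $\bar{p}$ via disjunction of antecedents; reading $\leadsto$ as $\Rightarrow$ gives the set $P^l_{\Rightarrow}$. Tree formula: $[\![l]\!] = \mathcal{T}(\varphi,\emptyset)$ where $(\varphi\Rightarrow\bar{l})\in P^l_{\Rightarrow}$, and $\mathcal{T}(\cdot,\mathcal{D})$ (with $\mathcal{D}$ a set of literals) is defined by: $\mathcal{T}(\bar{c},\mathcal{D}) = \bar{c}\vee\mathcal{T}(\varphi,\mathcal{D}\cup\{\bar{c}\})$ if $\bar{c}\notin\mathcal{D}$ where $(\varphi\Rightarrow\bar{c})\in P^l_{\Rightarrow}$, and $=\bar{c}\vee\mathsf{ff}$ otherwise; $\mathcal{T}(\neg\bar{c},\mathcal{D})=\mathcal{T}(\neg\varphi,\mathcal{D}\cup\{\neg\bar{c}\})$ if $\neg\bar{c}\notin\mathcal{D}$ where $(\varphi\Rightarrow\bar{c})\in P^l_{\Rightarrow}$, and $=\mathsf{tt}$ otherwise; $\mathcal{T}(\bar{x},\mathcal{D})=\mathcal{T}(\varphi,\mathcal{D})$ and $\mathcal{T}(\neg\bar{x},\mathcal{D})=\mathcal{T}(\neg\varphi,\mathcal{D})$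 where $(\varphi\Rightarrow\bar{x})\in P^l_{\Rightarrow}$; $\mathcal{T}(\neg(\varphi_1\wedge\dots\wedge\varphi_n),\mathcal{D})=\bigvee_i\mathcal{T}(\neg\varphi_i,\mathcal{D})$; $\mathcal{T}(\neg(\varphi_1\vee\dots\vee\varphi_n),\mathcal{D})=\bigwedge_i\mathcal{T}(\neg\varphi_i,\mathcal{D})$; $\mathcal{T}(\varphi_1\wedge\dots\wedge\varphi_n,\mathcal{D})=\bigwedge_i\mathcal{T}(\varphi_i,\mathcal{D})$; $\mathcal{T}(\varphi_1\vee\dots\vee\varphi_n,\mathcal{D})=\bigvee_i\mathcal{T}(\varphi_i,\mathcal{D})$; $\mathcal{T}(\mathsf{tt},\mathcal{D})=\mathsf{tt}$; $\mathcal{T}(\mathsf{ff},\mathcal{D})=\mathsf{ff}$. *)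

theory Defs
  imports Main
begin

text \<open>Names (channels) have type 'n, variables type 'v, labels type 'l.
  Quality guards are restricted to the two guards of the statement.\<close>

datatype qual = QAll | QEx

datatype ('n, 'v) trm = TName 'n | TVar 'v

datatype ('n, 'v) bndr =
    BIn 'n 'v
  | BQ qual "('n, 'v) bndr list"

datatype ('n, 'v, 'l) proc =
    PNil
  | PNu 'n "('n, 'v, 'l) proc"
  | PPar "('n, 'v, 'l) proc" "('n, 'v, 'l) proc"
  | PInp 'l "('n, 'v) bndr" "('n, 'v, 'l) proc"
  | POut 'l 'n "('n, 'v) trm" "('n, 'v, 'l) proc"
  | PRep "('n, 'v, 'l) proc"
  | PCase 'l 'v 'v "('n, 'v, 'l) proc" "('n, 'v, 'l) proc"
      (* case x of some(y): P1 else P2 *)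

fun bvars_b :: "('n, 'v) bndr \<Rightarrow> 'v list" where
  "bvars_b (BIn c x) = [x]"
| "bvars_b (BQ q bs) = concat (map bvars_b bs)"

fun chans_b :: "('n, 'v) bndr \<Rightarrow> 'n list" where
  "chans_b (BIn c x) = [c]"
| "chans_b (BQ q bs) = concat (map chans_b bs)"

fun bvars :: "('n, 'v, 'l) proc \<Rightarrow> 'v list" where
  "bvars PNil = []"
| "bvars (PNu c P) = bvars P"
| "bvars (PPar P Q) = bvars P @ bvars Q"
| "bvars (PInp l b P) = bvars_b b @ bvars P"
| "bvars (POut l c t P) = bvars P"
| "bvars (PRep P) = bvars P"
| "bvars (PCase l x y P Q) = y # bvars P @ bvars Q"

fun bnames :: "('n, 'v, 'l) proc \<Rightarrow> 'n list" where
  "bnames PNil = []"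
| "bnames (PNu c P) = c # bnames P"
| "bnames (PPar P Q) = bnames P @ bnames Q"
| "bnames (PInp l b P) = bnames P"
| "bnames (POut l c t P) = bnames P"
| "bnames (PRep P) = bnames P"
| "bnames (PCase l x y P Q) = bnames P @ bnames Q"

fun fv_t :: "('n, 'v) trm \<Rightarrow> 'v set" where
  "fv_t (TName c) = {}"
| "fv_t (TVar y) = {y}"

fun fn_t :: "('n, 'v) trm \<Rightarrow> 'n set" where
  "fn_t (TName c) = {c}"
| "fn_t (TVar y) = {}"

fun fv :: "('n, 'v, 'l) proc \<Rightarrow> 'v set" where
  "fv PNil = {}"
| "fv (PNu c P) = fv P"
| "fv (PPar P Q) = fv P \<union> fv Q"
| "fv (PInp l b P) = fv P - set (bvars_b b)"
| "fv (POut l c t P) = fv_t t \<union> fv P"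
| "fv (PRep P) = fv P"
| "fv (PCase l x y P Q) = {x} \<union> (fv P - {y}) \<union> fv Q"

fun fnames :: "('n, 'v, 'l) proc \<Rightarrow> 'n set" where
  "fnames PNil = {}"
| "fnames (PNu c P) = fnames P - {c}"
| "fnames (PPar P Q) = fnames P \<union> fnames Q"
| "fnames (PInp l b P) = set (chans_b b) \<union> fnames P"
| "fnames (POut l c t P) = {c} \<union> fn_t t \<union> fnames P"
| "fnames (PRep P) = fnames P"
| "fnames (PCase l x y P Q) = fnames P \<union> fnames Q"

fun labels :: "('n, 'v, 'l) proc \<Rightarrow> 'l list" where
  "labels PNil = []"
| "labels (PNu c P) = labels P"
| "labels (PPar P Q) = labels P @ labels Q"
| "labels (PInp l b P) = l # labels P"
| "labels (POut l c t P) = l # labels P"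
| "labels (PRep P) = labels P"
| "labels (PCase l x y P Q) = l # labels P @ labels Q"

definition closed :: "('n, 'v, 'l) proc \<Rightarrow> bool" where
  "closed P \<longleftrightarrow> fv P = {}"

definition bound_once :: "('n, 'v, 'l) proc \<Rightarrow> bool" where
  "bound_once P \<longleftrightarrow> distinct (bvars P) \<and> distinct (bnames P)
                      \<and> set (bnames P) \<inter> fnames P = {}"

definition unique_labels :: "('n, 'v, 'l) proc \<Rightarrow> bool" where
  "unique_labels P \<longleftrightarrow> distinct (labels P)"

text \<open>Propositional variables: \<open>\<bar>c\<close> for channels, \<open>\<bar>x\<close> for variables, \<open>\<bar>l\<close> for labels.\<close>
datatype ('n, 'v, 'l) pvar = PC 'n | PX 'v | PL 'l

datatype ('n, 'v, 'l) form =
    FTT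
  | FFF
  | Lit "('n, 'v, 'l) pvar"
  | FNot "('n, 'v, 'l) form"
  | FAnd "('n, 'v, 'l) form list"
  | FOr "('n, 'v, 'l) form list"

fun qform :: "qual \<Rightarrow> ('n, 'v, 'l) form list \<Rightarrow> ('n, 'v, 'l) form" where
  "qform QAll fs = FAnd fs"
| "qform QEx fs = FOr fs"

fun hp :: "('n, 'v) bndr \<Rightarrow> ('n, 'v, 'l) form" where
  "hp (BIn c x) = Lit (PC c)"
| "hp (BQ q bs) = qform q (map hp bs)"

type_synonym ('n, 'v, 'l) constr = "('n, 'v, 'l) form \<times> ('n, 'v, 'l) pvar"

fun th :: "('n, 'v, 'l) form \<Rightarrow> ('n, 'v) bndr \<Rightarrow> ('n, 'v, 'l) constr list" where
  "th \<phi> (BIn c x) = [(FAnd [\<phi>, Lit (PC c)], PX x)]"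
| "th \<phi> (BQ q bs) = concat (map (th \<phi>) bs)"

text \<open>The translation \<open>T(P,\<phi>)\<close>; a constraint \<open>(\<phi>, p)\<close> stands for \<open>\<phi> \<leadsto> \<bar>p\<close>.\<close>
fun trans :: "('n, 'v, 'l) proc \<Rightarrow> ('n, 'v, 'l) form \<Rightarrow> ('n, 'v, 'l) constr list" where
  "trans PNil \<phi> = []"
| "trans (PRep P) \<phi> = trans P \<phi>"
| "trans (PPar P Q) \<phi> = trans P \<phi> @ trans Q \<phi>"
| "trans (PNu c P) \<phi> = trans P \<phi>"
| "trans (PInp l b P) \<phi> = trans P (FAnd [\<phi>, hp b]) @ th \<phi> b @ [(\<phi>, PL l)]"
| "trans (POut l c t P) \<phi> = trans P \<phi> @ [(\<phi>, PC c)] @ [(\<phi>, PL l)]"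
| "trans (PCase l x y P Q) \<phi> =
     trans P (FAnd [\<phi>, Lit (PX x)]) @ trans Q (FAnd [\<phi>, FNot (Lit (PX x))]) @ [(\<phi>, PL l)]"

text \<open>Normalisation: the antecedent of \<open>\<bar>p\<close> in \<open>P\<^sup>l\<^sub>\<Rightarrow>\<close> is the disjunction of all antecedents
  of constraints with consequent \<open>\<bar>p\<close> (the empty disjunction, i.e. ff, if there is none).\<close>
definition ante :: "('n, 'v, 'l) proc \<Rightarrow> ('n, 'v, 'l) pvar \<Rightarrow> ('n, 'v, 'l) form" where
  "ante P p = FOr (map fst (filter (\<lambda>(\<phi>, q). q = p) (trans P FTT)))"

text \<open>\<open>tree A D \<phi> \<psi>\<close> means \<open>\<T>(\<phi>, D) = \<psi>\<close>, where \<open>A p\<close> is the antecedent of \<open>\<bar>p\<close> and D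
  is a set of literals (formulas of shape \<open>\<bar>c\<close> or \<open>\<not>\<bar>c\<close>). Since the recursion is not
  structural it is given as an inductive (deterministic) relation.\<close>
inductive tree :: "(('n, 'v, 'l) pvar \<Rightarrow> ('n, 'v, 'l) form) \<Rightarrow> ('n, 'v, 'l) form set
                   \<Rightarrow> ('n, 'v, 'l) form \<Rightarrow> ('n, 'v, 'l) form \<Rightarrow> bool"
  for A :: "('n, 'v, 'l) pvar \<Rightarrow> ('n, 'v, 'l) form" where
  chan_new: "Lit (PC c) \<notin> D \<Longrightarrow> tree A (insert (Lit (PC c)) D) (A (PC c)) \<psi>
             \<Longrightarrow> tree A D (Lit (PC c)) (FOr [Lit (PC c), \<psi>])"
| chan_old: "Lit (PC c) \<in> D \<Longrightarrow> tree A D (Lit (PC c)) (FOr [Lit (PC c), FFF])"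
| nchan_new: "FNot (Lit (PC c)) \<notin> D
             \<Longrightarrow> tree A (insert (FNot (Lit (PC c))) D) (FNot (A (PC c))) \<psi>
             \<Longrightarrow> tree A D (FNot (Lit (PC c))) \<psi>"
| nchan_old: "FNot (Lit (PC c)) \<in> D \<Longrightarrow> tree A D (FNot (Lit (PC c))) FTT"
| var: "tree A D (A (PX x)) \<psi> \<Longrightarrow> tree A D (Lit (PX x)) \<psi>"
| nvar: "tree A D (FNot (A (PX x))) \<psi> \<Longrightarrow> tree A D (FNot (Lit (PX x))) \<psi>"
| nand: "list_all2 (\<lambda>f g. tree A D (FNot f) g) fs gs \<Longrightarrow> tree A D (FNot (FAnd fs)) (FOr gs)"
| nor: "list_all2 (\<lambda>f g. tree A D (FNot f) g) fs gs \<Longrightarrow> tree A D (FNot (FOr fs)) (FAnd gs)"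
| conj: "list_all2 (\<lambda>f g. tree A D f g) fs gs \<Longrightarrow> tree A D (FAnd fs) (FAnd gs)"
| disj: "list_all2 (\<lambda>f g. tree A D f g) fs gs \<Longrightarrow> tree A D (FOr fs) (FOr gs)"
| tt: "tree A D FTT FTT"
| ff: "tree A D FFF FFF"
| ntt: "tree A D (FNot FTT) FFF"
| nff: "tree A D (FNot FFF) FTT"
| nnot: "tree A D f g \<Longrightarrow> tree A D (FNot (FNot f)) g"

definition label_formula :: "('n, 'v, 'l) proc \<Rightarrow> 'l \<Rightarrow> ('n, 'v, 'l) form \<Rightarrow> bool" where
  "label_formula P l \<psi> \<longleftrightarrow> tree (ante P) {} (ante P (PL l)) \<psi>"

fun lits :: "('n, 'v, 'l) form \<Rightarrow> ('n, 'v, 'l) pvar set" where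
  "lits FTT = {}"
| "lits FFF = {}"
| "lits (Lit p) = {p}"
| "lits (FNot f) = lits f"
| "lits (FAnd fs) = \<Union> (set (map lits fs))"
| "lits (FOr fs) = \<Union> (set (map lits fs))"

end

theory Submission
  imports Defs
begin

text \<open>Every leaf of a tree formula is a channel literal, a constant, or the cut-off
  \<open>\<bar>c \<or> ff\<close> / \<open>tt\<close>: variable literals are always unfolded into their antecedents. So the
  content of the theorem is that this unfolding terminates. Channel unfoldings are
  bounded by the finitely many channel literals that can enter \<open>\<D>\<close>. Variable unfoldings
  terminate because, in a closed process whose variables are bound once, the antecedent
  of \<open>\<bar>x\<close> only mentions variables bound strictly outside the binder of \<open>x\<close>, so the
  binding depth of the unfolded variable decreases.\<close>

definition label_free :: "('n, 'v, 'l) form \<Rightarrow> bool" where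
  "label_free f \<longleftrightarrow> (\<forall>l. PL l \<notin> lits f)"

lemma label_free_simps [simp]:
  "label_free (FNot f) \<longleftrightarrow> label_free f"
  "label_free (FAnd fs) \<longleftrightarrow> (\<forall>f\<in>set fs. label_free f)"
  "label_free (FOr fs) \<longleftrightarrow> (\<forall>f\<in>set fs. label_free f)"
  by (auto simp: label_free_def)

lemma finite_lits: "finite (lits f)"
  by (induction f) auto

lemma ex_list_all2:
  assumes "\<forall>x\<in>set xs. \<exists>y. Q x y"
  shows "\<exists>ys. list_all2 Q xs ys"
proof -
  from assms obtain h where "\<forall>x\<in>set xs. Q x (h x)" by metis
  then have "list_all2 Q xs (map h xs)" by (simp add: list_all2_map2 list_all2_same)
  then show ?thesis ..
qed

lemma tree_lits_channels: "tree A D f g \<Longrightarrow> lits g \<subseteq> range PC"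
  by (induction rule: tree.induct) (fastforce simp: list_all2_conv_all_nth in_set_conv_nth)+

lemma tree_exists_junctions:
  assumes "\<forall>f\<in>set fs. (\<exists>g. tree A D f g) \<and> (\<exists>g. tree A D (FNot f) g)"
  shows "(\<exists>g. tree A D (FAnd fs) g) \<and> (\<exists>g. tree A D (FNot (FAnd fs)) g)"
    and "(\<exists>g. tree A D (FOr fs) g) \<and> (\<exists>g. tree A D (FNot (FOr fs)) g)"
proof -
  from assms obtain gs hs where "list_all2 (tree A D) fs gs"
      and "list_all2 (\<lambda>f. tree A D (FNot f)) fs hs"
    using ex_list_all2[of fs "tree A D"] ex_list_all2[of fs "\<lambda>f. tree A D (FNot f)"] by blast
  then show "(\<exists>g. tree A D (FAnd fs) g) \<and> (\<exists>g. tree A D (FNot (FAnd fs)) g)"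
    and "(\<exists>g. tree A D (FOr fs) g) \<and> (\<exists>g. tree A D (FNot (FOr fs)) g)"
    by (blast intro: tree.intros)+
qed

text \<open>The channel cases, which enlarge \<open>D\<close>, are taken as hypotheses here; they are
  discharged by the induction on the size of \<open>D\<close> in the next lemma.\<close>
lemma tree_exists_rank_bounded:
  fixes A :: "('n, 'v, 'l) pvar \<Rightarrow> ('n, 'v, 'l) form" and r :: "'v \<Rightarrow> nat"
  assumes label_free_A: "\<And>p. label_free (A p)"
    and rank_decreasing: "\<And>x x'. PX x' \<in> lits (A (PX x)) \<Longrightarrow> r x' < r x"
    and chan: "\<And>c. Lit (PC c) \<notin> D \<Longrightarrow> \<exists>g. tree A (insert (Lit (PC c)) D) (A (PC c)) g"
    and nchan: "\<And>c. FNot (Lit (PC c)) \<notin> D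
                  \<Longrightarrow> \<exists>g. tree A (insert (FNot (Lit (PC c))) D) (FNot (A (PC c))) g"
    and "label_free f" and "\<forall>x. PX x \<in> lits f \<longrightarrow> r x < n"
  shows "(\<exists>g. tree A D f g) \<and> (\<exists>g. tree A D (FNot f) g)"
  using assms(5,6)
proof (induction n arbitrary: f rule: less_induct)
  case (less n)
  then show ?case
  proof (induction f)
    case FTT
    then show ?case by (blast intro: tree.intros)
  next
    case FFF
    then show ?case by (blast intro: tree.intros)
  next
    case (Lit p)
    show ?case
    proof (cases p)
      case (PC c)
      have "\<exists>g. tree A D (Lit (PC c)) g"
        using chan by (cases "Lit (PC c) \<in> D") (blast intro: tree.intros)+
      moreover have "\<exists>g. tree A D (FNot (Lit (PC c))) g"
        using nchan by (cases "FNot (Lit (PC c)) \<in> D") (blast intro: tree.intros)+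
      ultimately show ?thesis using PC by simp
    next
      case (PX x)
      with Lit.prems have "r x < n" by simp
      moreover have "label_free (A (PX x))" by (rule label_free_A)
      ultimately have "(\<exists>g. tree A D (A (PX x)) g) \<and> (\<exists>g. tree A D (FNot (A (PX x))) g)"
        using less.IH rank_decreasing by blast
      then show ?thesis using PX by (blast intro: tree.intros)
    next
      case (PL l)
      with Lit.prems show ?thesis by (simp add: label_free_def)
    qed
  next
    case (FNot f)
    then have "\<exists>g. tree A D f g" "\<exists>g. tree A D (FNot f) g" by simp_all
    then show ?case by (blast intro: tree.nnot)
  next
    case (FAnd fs)
    then show ?case by (intro tree_exists_junctions(1)) fastforce
  next
    case (FOr fs)
    then show ?case by (intro tree_exists_junctions(2)) fastforce
  qed
qed

lemma tree_exists:
  fixes A :: "('n, 'v, 'l) pvar \<Rightarrow> ('n, 'v, 'l) form" and r :: "'v \<Rightarrow> nat"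
  assumes label_free_A: "\<And>p. label_free (A p)"
    and rank_decreasing: "\<And>x x'. PX x' \<in> lits (A (PX x)) \<Longrightarrow> r x' < r x"
    and finite_channels: "finite {c. A (PC c) \<noteq> FOr []}"
    and "label_free f"
  shows "\<exists>g. tree A D f g"
proof -
  define C where "C = {c. A (PC c) \<noteq> FOr []}"
  define L :: "('n, 'v, 'l) form set"
    where "L = (\<lambda>c. Lit (PC c)) ` C \<union> (\<lambda>c. FNot (Lit (PC c))) ` C"
  have "finite L" using finite_channels by (simp add: L_def C_def)
  show ?thesis
    using \<open>label_free f\<close>
  proof (induction "card (L - D)" arbitrary: D f rule: less_induct)
    case less
    have smaller: "card (L - insert a D) < card (L - D)" if "a \<in> L" "a \<notin> D" for a
      using that \<open>finite L\<close> by (intro psubset_card_mono) auto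
    have chan: "\<exists>g. tree A (insert (Lit (PC c)) D) (A (PC c)) g" if "Lit (PC c) \<notin> D" for c
    proof (cases "c \<in> C")
      case True
      then have "Lit (PC c) \<in> L" by (simp add: L_def)
      from less.hyps[OF smaller[OF this that] label_free_A] show ?thesis .
    next
      case False
      then show ?thesis by (auto simp: C_def intro: tree.disj)
    qed
    have nchan: "\<exists>g. tree A (insert (FNot (Lit (PC c))) D) (FNot (A (PC c))) g"
      if "FNot (Lit (PC c)) \<notin> D" for c
    proof (cases "c \<in> C")
      case True
      then have "FNot (Lit (PC c)) \<in> L" by (simp add: L_def)
      moreover have "label_free (FNot (A (PC c)))" by (simp add: label_free_A)
      ultimately show ?thesis using less.hyps[OF smaller[OF _ that]] by blast
    next
      case False
      then show ?thesis by (auto simp: C_def intro: tree.nor)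
    qed
    obtain n where "\<forall>x. PX x \<in> lits f \<longrightarrow> r x < n"
    proof -
      have "finite (r ` {x. PX x \<in> lits f})"
        using finite_vimageI[OF finite_lits, of PX f] by (simp add: vimage_def inj_def)
      then show ?thesis using that by (auto simp: finite_nat_set_iff_bounded)
    qed
    then show ?case
      using tree_exists_rank_bounded[of A r D f, OF label_free_A rank_decreasing chan nchan less.prems]
      by blast
  qed
qed

lemma lits_hp: "lits (hp b) \<subseteq> range PC"
proof (induction b)
  case (BQ q bs)
  then show ?case by (cases q) auto
qed simp

lemma th_constraint:
  "(\<psi>, p) \<in> set (th \<phi> b) \<Longrightarrow>
     \<exists>c x. \<psi> = FAnd [\<phi>, Lit (PC c)] \<and> p = PX x \<and> x \<in> set (bvars_b b)"
  by (induction b) fastforce+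

lemma trans_label_lits:
  "(\<psi>, p) \<in> set (trans P \<phi>) \<Longrightarrow> PL l \<in> lits \<psi> \<Longrightarrow> PL l \<in> lits \<phi>"
proof (induction P arbitrary: \<phi>)
  case (PInp l' b P)
  then show ?case using lits_hp[of b] by (fastforce dest: th_constraint)
qed fastforce+

lemma trans_var_bound: "(\<psi>, PX x) \<in> set (trans P \<phi>) \<Longrightarrow> x \<in> set (bvars P)"
  by (induction P arbitrary: \<phi>) (auto dest: th_constraint)

text \<open>The number of variable binders strictly enclosing the binder of \<open>x\<close>;
  meaningful only for \<open>x \<in> set (bvars P)\<close>.\<close>
fun binding_depth :: "('n, 'v, 'l) proc \<Rightarrow> 'v \<Rightarrow> nat" where
  "binding_depth PNil x = 0"
| "binding_depth (PNu c P) x = binding_depth P x"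
| "binding_depth (PPar P Q) x =
     (if x \<in> set (bvars P) then binding_depth P x else binding_depth Q x)"
| "binding_depth (PInp l b P) x =
     (if x \<in> set (bvars_b b) then 0 else Suc (binding_depth P x))"
| "binding_depth (POut l c t P) x = binding_depth P x"
| "binding_depth (PRep P) x = binding_depth P x"
| "binding_depth (PCase l x0 y P Q) x =
     (if x = y then 0
      else if x \<in> set (bvars P) then Suc (binding_depth P x) else Suc (binding_depth Q x))"

lemma trans_var_dependency:
  assumes "distinct (bvars P)" and "(\<psi>, PX x) \<in> set (trans P \<phi>)" and "PX x' \<in> lits \<psi>"
  shows "PX x' \<in> lits \<phi> \<or> x' \<in> fv P
           \<or> (x' \<in> set (bvars P) \<and> binding_depth P x' < binding_depth P x)"
  using assms
proof (induction P arbitrary: \<phi>)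
  case (PPar P Q)
  then show ?case by (auto dest: trans_var_bound)
next
  case (PInp l b P)
  have distinct: "distinct (bvars P)" "set (bvars_b b) \<inter> set (bvars P) = {}"
    using PInp.prems(1) by auto
  from PInp.prems(2) consider
      (body) "(\<psi>, PX x) \<in> set (trans P (FAnd [\<phi>, hp b]))"
    | (input) "(\<psi>, PX x) \<in> set (th \<phi> b)"
    by auto
  then show ?case
  proof cases
    case body
    then have "x \<notin> set (bvars_b b)" using distinct(2) by (auto dest: trans_var_bound)
    moreover have "PX x' \<in> lits (FAnd [\<phi>, hp b]) \<or> x' \<in> fv P
        \<or> (x' \<in> set (bvars P) \<and> binding_depth P x' < binding_depth P x)"
      using PInp.IH[OF distinct(1) body PInp.prems(3)] .
    ultimately show ?thesis using distinct(2) lits_hp[of b] by auto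
  next
    case input
    then show ?thesis using PInp.prems(3) by (auto dest: th_constraint)
  qed
next
  case (PCase l x0 y P Q)
  have distinct: "distinct (bvars P)" "distinct (bvars Q)"
      "y \<notin> set (bvars P)" "y \<notin> set (bvars Q)" "set (bvars P) \<inter> set (bvars Q) = {}"
    using PCase.prems(1) by auto
  from PCase.prems(2) consider
      (some) "(\<psi>, PX x) \<in> set (trans P (FAnd [\<phi>, Lit (PX x0)]))"
    | (none) "(\<psi>, PX x) \<in> set (trans Q (FAnd [\<phi>, FNot (Lit (PX x0))]))"
    by auto
  then show ?case
  proof cases
    case some
    then have "x \<in> set (bvars P)" by (rule trans_var_bound)
    moreover have "PX x' \<in> lits (FAnd [\<phi>, Lit (PX x0)]) \<or> x' \<in> fv P
        \<or> (x' \<in> set (bvars P) \<and> binding_depth P x' < binding_depth P x)"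
      using PCase.IH(1)[OF distinct(1) some PCase.prems(3)] .
    ultimately show ?thesis using distinct by auto
  next
    case none
    then have "x \<in> set (bvars Q)" by (rule trans_var_bound)
    moreover have "PX x' \<in> lits (FAnd [\<phi>, FNot (Lit (PX x0))]) \<or> x' \<in> fv Q
        \<or> (x' \<in> set (bvars Q) \<and> binding_depth Q x' < binding_depth Q x)"
      using PCase.IH(2)[OF distinct(2) none PCase.prems(3)] .
    ultimately show ?thesis using distinct by auto
  qed
qed auto

lemma lits_ante:
  "p' \<in> lits (ante P p) \<longleftrightarrow> (\<exists>\<psi>. (\<psi>, p) \<in> set (trans P FTT) \<and> p' \<in> lits \<psi>)"
  by (auto simp: ante_def)

lemma label_free_ante: "label_free (ante P p)"
  by (auto simp: label_free_def lits_ante dest: trans_label_lits)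

lemma ante_var_depth:
  assumes "closed P" and "distinct (bvars P)" and "PX x' \<in> lits (ante P (PX x))"
  shows "binding_depth P x' < binding_depth P x"
  using assms trans_var_dependency[OF assms(2)] by (fastforce simp: closed_def lits_ante)

lemma finite_ante_channels: "finite {c. ante P (PC c) \<noteq> FOr []}"
proof (rule finite_subset)
  show "{c. ante P (PC c) \<noteq> FOr []} \<subseteq> PC -` (snd ` set (trans P FTT))"
    by (force simp: ante_def filter_empty_conv)
  show "finite (PC -` (snd ` set (trans P FTT)))"
    by (rule finite_vimageI) (auto simp: inj_def)
qed

theorem lemmaB3:
  fixes P :: "('n, 'v, 'l) proc"
  assumes "closed P" and "bound_once P" and "unique_labels P"
  shows "\<forall>l \<in> set (labels P).
           (\<exists>\<psi>. label_formula P l \<psi>) \<and>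
           (\<forall>\<psi>. label_formula P l \<psi> \<longrightarrow>
                (\<forall>x. PX x \<notin> lits \<psi>) \<and> (\<forall>p \<in> lits \<psi>. \<exists>c. p = PC c))"
proof -
  have "distinct (bvars P)" using assms(2) by (simp add: bound_once_def)
  then have "\<exists>\<psi>. label_formula P l \<psi>" for l
    unfolding label_formula_def
    by (rule tree_exists[OF label_free_ante ante_var_depth[OF assms(1)] finite_ante_channels
          label_free_ante])
  moreover have "lits \<psi> \<subseteq> range PC" if "label_formula P l \<psi>" for l \<psi>
    using that unfolding label_formula_def by (rule tree_lits_channels)
  ultimately show ?thesis by fastforce
qed

end
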